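(* Let $F:\mathbb{R}^d\to\mathbb{R}$ be continuously differentiable with $L$-Lipschitz gradient and strongly convex with parameter $c>0$, i.e. $F(\bar w)\ge F(w)+\nabla F(w)^\top(\bar w-w)+\tfrac c2\|\bar w-w\|_2^2$ for all $w,\bar w$; let $w_*$ be its unique minimizer and $F_*=F(w_* )$. Consider the low-precision SGD iteration $w_{k+1}=w_k-\alpha_k\,\tilde g(w_k,\xi_k)$ with $\tilde g(w_k,\xi_k)=q_k\,g(w_k,\xi_k)+\varepsilon_k$. Assume: (a) the iterates lie in an open set on which $F$ is bounded below by $F_{\inf}=F_*$; (b) there exist scalars $\mu_G\ge\mu>0$ such that for all $k$, $\nabla F(w_k)^\top\mathbb{E}_{\xi_k}[\tilde g(w_k,\xi_k)]\ge q_{\min}\mu\|\nabla F(w_k)\|_2^2$ and $\|\mathbb{E}_{\xi_k}[\tilde g(w_k,\xi_k)]\|_2\le q_{\max}\mu_G\|\nabla F(w_k)\|_2$; (c) there exist scalars $\tilde M\ge0$, $\tilde M_V\ge0$ such that for all $k$, $\mathbb{E}_{\xi_k}\|\tilde g(w_k,\xi_k)\|_2^2-\|\mathbb{E}_{\xi_k}[\tilde g(w_k,\xi_k)]\|_2^2\le\tilde M+\tilde M_V\|\nabla F(w_k)\|_2^2$. Let $\mu_q:=q_{\min}\mu$, $\tilde M_G:=\tilde M_V+q_{\max}^2\mu_G^2$, and let the stepsizes be $\alpha_k=\frac{\beta}{\gamma+k}$ with $\beta>\frac{1}{c\mu_q}$, $\gamma>0$, such that $\alpha_1\le\frac{\mu_q}{L\tilde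 M_G}$. Then for all $k\in\mathbb{N}$, \[ \mathbb{E}[F(w_k)-F_*]\le\frac{\nu_q}{\gamma+k},\qquad \nu_q:=\max\Big\{\frac{\beta^2L\tilde M}{2(\beta c\mu_q-1)},\;(\gamma+1)(F(w_1)-F_* )\Big\}. \]
   Context: The objective is $F(w)=\mathbb{E}_{\xi\sim\mathcal D}[\ell(\xi,w)]$, $w_1$ is a given initial point. At iteration $k$, $\xi_k$ is drawn i.i.d. from $\mathcal D$, $g(w_k,\xi_k)=\nabla F(w_k;\xi_k)$, $q_k\in[q_{\min},q_{\max}]\subset(0,1]$ with $q_{\min}>0$ is a shrinkage factor, and $\varepsilon_k$ is quantization noise with $\mathbb{E}[\varepsilon_k\mid\mathcal F_k]=0$ and $\mathbb{E}\|\varepsilon_k\|_2^2\le\sigma_\varepsilon^2$, $\mathcal F_k$ being the $\sigma$-algebra of all randomness up to iteration $k$. $\mathbb{E}_{\xi_k}[\cdot]$ denotes expectation over $(\xi_k,q_k,\varepsilon_k)$ conditional on $w_k$, and $\mathbb{E}[\cdot]$ is total expectation over all randomness. *)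

theory Defs
  imports "HOL-Probability.Probability"
begin

definition cond_exp_vec :: "'a measure \<Rightarrow> 'a measure \<Rightarrow> ('a \<Rightarrow> 'v::euclidean_space) \<Rightarrow> 'a \<Rightarrow> 'v" where
  "cond_exp_vec M G f = (\<lambda>x. \<Sum>b\<in>Basis. real_cond_exp M G (\<lambda>y. f y \<bullet> b) x *\<^sub>R b)"

end

theory Submission
  imports Defs
begin

(* By L-smoothness, F (w (k+1)) <= F (w k) - alpha_k <grad F (w k), g_k> + L alpha_k^2 / 2 |g_k|^2.
   Taking expectations, the tower property replaces both moments of g_k by conditional ones,
   which (b) and (c) bound by multiples of |grad F (w k)|^2 (plus the constant Mt), and the
   step size condition alpha_k L M_G <= mu_q lets the second-order term cancel at most half of
   the first-order decrease.  The Polyak-Lojasiewicz inequality 2 c (F x - F_star) <= |grad F x|^2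
   of strongly convex functions then gives the contraction
     E[F (w (k+1)) - F_star] <= (1 - alpha_k c mu_q) E[F (w k) - F_star] + L alpha_k^2 Mt / 2,
   and with alpha_k = beta / (gamma + k) the bound nu_q / (gamma + k) follows by induction. *)

section \<open>Smooth strongly convex functions\<close>

lemma Lipschitz_gradient_quadratic_upper_bound:
  fixes F :: "'v::real_inner \<Rightarrow> real" and gradF :: "'v \<Rightarrow> 'v"
  assumes F_deriv: "\<And>x. (F has_derivative (\<lambda>h. gradF x \<bullet> h)) (at x)"
    and gradF_Lip: "\<And>x y. norm (gradF x - gradF y) \<le> L * norm (x - y)"
  shows "F y \<le> F x + gradF x \<bullet> (y - x) + L / 2 * (norm (y - x))\<^sup>2"
proof -
  define h where "h = y - x"
  define \<phi> where "\<phi> t = F (x + t *\<^sub>R h) - t * (gradF x \<bullet> h) - L / 2 * t\<^sup>2 * (norm h)\<^sup>2" for t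
  define \<phi>' where "\<phi>' t = (gradF (x + t *\<^sub>R h) - gradF x) \<bullet> h - L * t * (norm h)\<^sup>2" for t
  have \<phi>_deriv: "(\<phi> has_real_derivative \<phi>' t) (at t)" for t
  proof -
    have "((\<lambda>t. x + t *\<^sub>R h) has_derivative (\<lambda>s. s *\<^sub>R h)) (at t)"
      by (auto intro!: derivative_eq_intros)
    from has_derivative_compose[OF this F_deriv]
    have "((\<lambda>t. F (x + t *\<^sub>R h)) has_real_derivative (gradF (x + t *\<^sub>R h) \<bullet> h)) (at t)"
      unfolding has_field_derivative_def by (rule has_derivative_eq_rhs) (auto simp: mult.commute)
    then show ?thesis unfolding \<phi>_def \<phi>'_def
      by (auto intro!: derivative_eq_intros simp: power2_eq_square inner_diff_left)
  qed
  have \<phi>'_nonpos: "\<phi>' t \<le> 0" if "0 \<le> t" for t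
  proof -
    have "(gradF (x + t *\<^sub>R h) - gradF x) \<bullet> h \<le> norm (gradF (x + t *\<^sub>R h) - gradF x) * norm h"
      by (rule norm_cauchy_schwarz)
    also have "\<dots> \<le> L * norm (t *\<^sub>R h) * norm h"
      using gradF_Lip[of "x + t *\<^sub>R h" x] by (intro mult_right_mono) auto
    also have "\<dots> = L * t * (norm h)\<^sup>2"
      using that by (simp add: power2_eq_square)
    finally show ?thesis unfolding \<phi>'_def by simp
  qed
  have "\<phi> 1 \<le> \<phi> 0"
    using \<phi>_deriv \<phi>'_nonpos by (intro DERIV_nonpos_imp_nonincreasing[of 0 1 \<phi>]) auto
  then show ?thesis unfolding \<phi>_def h_def by simp
qed

lemma strongly_convex_suboptimality_le_gradient:
  fixes F :: "'v::real_inner \<Rightarrow> real" and gradF :: "'v \<Rightarrow> 'v"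
  assumes c_pos: "c > 0"
    and strongly_convex: "\<And>x y. F y \<ge> F x + gradF x \<bullet> (y - x) + c / 2 * (norm (y - x))\<^sup>2"
  shows "2 * c * (F x - F y) \<le> (norm (gradF x))\<^sup>2"
proof -
  define d where "d = y - x"
  have "2 * c * (F x - F y) \<le> 2 * c * (- (gradF x \<bullet> d) - c / 2 * (norm d)\<^sup>2)"
    using strongly_convex[of x y] c_pos unfolding d_def by (intro mult_left_mono) auto
  also have "\<dots> = (norm (gradF x))\<^sup>2 - (norm (c *\<^sub>R d + gradF x))\<^sup>2"
    unfolding power2_norm_eq_inner
    by (simp add: inner_commute power2_eq_square algebra_simps)
  also have "\<dots> \<le> (norm (gradF x))\<^sup>2"
    by simp
  finally show ?thesis .
qed

lemma strong_convexity_modulus_le_Lipschitz: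
  fixes F :: "'v::real_inner \<Rightarrow> real" and gradF :: "'v \<Rightarrow> 'v" and x y :: 'v
  assumes strongly_convex: "\<And>x y. F y \<ge> F x + gradF x \<bullet> (y - x) + c / 2 * (norm (y - x))\<^sup>2"
    and gradF_Lip: "\<And>x y. norm (gradF x - gradF y) \<le> L * norm (x - y)"
    and "x \<noteq> y"
  shows "c \<le> L"
proof -
  have "c * (norm (y - x))\<^sup>2 \<le> (gradF y - gradF x) \<bullet> (y - x)"
    using strongly_convex[of x y] strongly_convex[of y x]
    by (simp add: inner_diff_left inner_diff_right norm_minus_commute inner_commute)
  also have "\<dots> \<le> norm (gradF y - gradF x) * norm (y - x)"
    by (rule norm_cauchy_schwarz)
  also have "\<dots> \<le> L * (norm (y - x))\<^sup>2"
    using mult_right_mono[OF gradF_Lip[of y x], of "norm (y - x)"] by (simp add: power2_eq_square)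
  finally show ?thesis
    using \<open>x \<noteq> y\<close> by simp
qed

lemma gradient_zero_at_minimum:
  fixes F :: "'v::real_inner \<Rightarrow> real"
  assumes "(F has_derivative (\<lambda>h. gradF x \<bullet> h)) (at x)" and "\<And>y. F x \<le> F y"
  shows "gradF x = 0"
proof -
  have "(\<lambda>h. gradF x \<bullet> h) = (\<lambda>h. 0)"
    using assms by (intro differential_zero_maxmin[of x UNIV]) auto
  then have "gradF x \<bullet> gradF x = 0" by metis
  then show ?thesis by simp
qed

section \<open>Harmonic step sizes\<close>

lemma diminishing_stepsize_recursion:
  fixes e alpha :: "nat \<Rightarrow> real" and beta gamma kappa A nu :: real
  assumes alpha_def: "\<And>k. alpha k = beta / (gamma + real k)"
    and gamma_pos: "gamma > 0" and beta_kappa: "beta * kappa > 1"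
    and A_nonneg: "A \<ge> 0" and nu_ge: "beta\<^sup>2 * A / (2 * (beta * kappa - 1)) \<le> nu"
    and init: "e 1 \<le> nu / (gamma + 1)"
    and contraction: "\<And>k. k \<ge> 1 \<Longrightarrow> alpha k * kappa \<le> 1"
    and recursion: "\<And>k. k \<ge> 1 \<Longrightarrow> e (Suc k) \<le> (1 - alpha k * kappa) * e k + A / 2 * (alpha k)\<^sup>2"
    and "k \<ge> 1"
  shows "e k \<le> nu / (gamma + real k)"
  using \<open>k \<ge> 1\<close>
proof (induction k rule: dec_induct)
  case base
  then show ?case using init by simp
next
  case (step k)
  define K where "K = gamma + k"
  have K_pos: "K > 0" unfolding K_def using gamma_pos by simp
  have alpha_k: "alpha k = beta / K"
    unfolding K_def alpha_def ..
  \<comment> \<open>the choice of \<open>nu\<close> lets the gap between \<open>nu / K\<close> and \<open>nu / (K + 1)\<close> absorb the noise term\<close>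
  have slack: "beta\<^sup>2 * A / 2 \<le> nu * (beta * kappa - 1)"
    using nu_ge beta_kappa by (simp add: pos_divide_le_eq algebra_simps)
  have "(1 - beta / K * kappa) * e k \<le> (1 - beta / K * kappa) * (nu / K)"
    using step.IH contraction[OF step.hyps(1), unfolded alpha_k] unfolding K_def by (intro mult_left_mono) auto
  then have "e (Suc k) \<le> (1 - beta / K * kappa) * (nu / K) + A / 2 * (beta / K)\<^sup>2"
    using recursion[OF step.hyps(1)] unfolding alpha_k by linarith
  also have "A / 2 * (beta / K)\<^sup>2 = (beta\<^sup>2 * A / 2) / K\<^sup>2"
    by (simp add: power_divide)
  also have "\<dots> \<le> nu * (beta * kappa - 1) / K\<^sup>2"
    using divide_right_mono[OF slack, of "K\<^sup>2"] by simp
  also have "(1 - beta / K * kappa) * (nu / K) + nu * (beta * kappa - 1) / K\<^sup>2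
      = nu * (K - 1) / K\<^sup>2"
    using K_pos by (simp add: field_simps power2_eq_square)
  also have "\<dots> \<le> nu / (K + 1)"
  proof -
    have "0 \<le> beta\<^sup>2 * A / (2 * (beta * kappa - 1))"
      using A_nonneg beta_kappa by simp
    then have "0 \<le> nu"
      using nu_ge by linarith
    then have "nu * (K - 1) * (K + 1) \<le> nu * K\<^sup>2"
      by (simp add: mult_left_mono power2_eq_square algebra_simps)
    then show ?thesis
      using K_pos by (simp add: field_simps)
  qed
  finally show ?case unfolding K_def by (simp add: add_ac)
qed

lemma stepsize_contraction_le_1:
  fixes a c L mu MG :: real
  assumes "0 \<le> a" and "0 < mu" and "mu\<^sup>2 \<le> MG" and "a * L * MG \<le> mu" and "c \<le> L"
  shows "a * c * mu \<le> 1"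
proof -
  have MG_pos: "0 < MG"
    using \<open>0 < mu\<close> \<open>mu\<^sup>2 \<le> MG\<close> zero_less_power[of mu 2] by linarith
  have "a * L * mu * MG \<le> mu * mu"
    using mult_left_mono[OF \<open>a * L * MG \<le> mu\<close>, of mu] \<open>0 < mu\<close> by (simp add: algebra_simps)
  also have "\<dots> \<le> MG"
    using \<open>mu\<^sup>2 \<le> MG\<close> by (simp add: power2_eq_square)
  finally have "a * L * mu \<le> 1"
    using MG_pos by (simp add: mult_le_cancel_right1)
  moreover have "a * c * mu \<le> a * L * mu"
    using assms by (intro mult_right_mono mult_left_mono) auto
  ultimately show ?thesis
    by linarith
qed

lemma harmonic_stepsize_conditions:
  fixes alpha :: "nat \<Rightarrow> real"
  assumes alpha_def: "\<And>k. alpha k = beta / (gamma + real k)"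
    and "gamma > 0" and "beta > 0" and "mu > 0" and "mu\<^sup>2 \<le> MG" and "L > 0" and "c \<le> L"
    and alpha1_le: "alpha 1 \<le> mu / (L * MG)"
    and "k \<ge> 1"
  shows "alpha k * L * MG \<le> mu" and "alpha k * (c * mu) \<le> 1"
proof -
  have "MG > 0"
    using \<open>mu\<^sup>2 \<le> MG\<close> zero_less_power[OF \<open>mu > 0\<close>, of 2] by linarith
  then have LMG_pos: "L * MG > 0"
    using \<open>L > 0\<close> by simp
  have "alpha k \<le> alpha 1"
    unfolding alpha_def using assms by (intro divide_left_mono) auto
  then have "alpha k * (L * MG) \<le> alpha 1 * (L * MG)"
    using LMG_pos by (intro mult_right_mono) auto
  also have "\<dots> \<le> mu"
    using alpha1_le LMG_pos by (simp add: pos_le_divide_eq)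
  finally show stepsize: "alpha k * L * MG \<le> mu"
    by (simp add: mult.assoc)
  have "alpha k \<ge> 0"
    unfolding alpha_def using assms by simp
  from stepsize_contraction_le_1[OF this \<open>mu > 0\<close> \<open>mu\<^sup>2 \<le> MG\<close> stepsize \<open>c \<le> L\<close>]
  show "alpha k * (c * mu) \<le> 1"
    by (simp add: mult.assoc)
qed

section \<open>Stochastic gradient iterations\<close>

lemma (in sigma_finite_subalgebra) integral_inner_cond_exp_vec:
  fixes V X :: "'a \<Rightarrow> 'v::euclidean_space"
  assumes V_meas: "V \<in> borel_measurable F" and X_meas: "X \<in> borel_measurable M"
    and V_sq_int: "integrable M (\<lambda>\<omega>. (norm (V \<omega>))\<^sup>2)"
    and X_sq_int: "integrable M (\<lambda>\<omega>. (norm (X \<omega>))\<^sup>2)"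
  shows "integrable M (\<lambda>\<omega>. V \<omega> \<bullet> X \<omega>)"
    and "integrable M (\<lambda>\<omega>. V \<omega> \<bullet> cond_exp_vec M F X \<omega>)"
    and "(\<integral>\<omega>. V \<omega> \<bullet> cond_exp_vec M F X \<omega> \<partial>M) = (\<integral>\<omega>. V \<omega> \<bullet> X \<omega> \<partial>M)"
proof -
  note X_meas[measurable]
  have [measurable]: "V \<in> borel_measurable M"
    using V_meas by (rule measurable_from_subalg[OF subalg])
  have component_int: "integrable M (\<lambda>\<omega>. (V \<omega> \<bullet> b) * (X \<omega> \<bullet> b))" if "b \<in> Basis" for b
  proof (rule Bochner_Integration.integrable_bound[OF Bochner_Integration.integrable_add[OF V_sq_int X_sq_int]])
    show "(\<lambda>\<omega>. (V \<omega> \<bullet> b) * (X \<omega> \<bullet> b)) \<in> borel_measurable M"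
      by measurable
    have "\<bar>(v \<bullet> b) * (x \<bullet> b)\<bar> \<le> (norm v)\<^sup>2 + (norm x)\<^sup>2" for v x :: 'v
    proof -
      have "\<bar>(v \<bullet> b) * (x \<bullet> b)\<bar> \<le> norm v * norm x"
        unfolding abs_mult using Basis_le_norm[OF that] by (intro mult_mono) auto
      also have "\<dots> \<le> (norm v)\<^sup>2 + (norm x)\<^sup>2"
        using sum_squares_bound[of "norm v" "norm x"] mult_nonneg_nonneg[OF norm_ge_zero norm_ge_zero, of v x]
        by linarith
      finally show ?thesis .
    qed
    then show "AE \<omega> in M. norm ((V \<omega> \<bullet> b) * (X \<omega> \<bullet> b)) \<le> norm ((norm (V \<omega>))\<^sup>2 + (norm (X \<omega>))\<^sup>2)"
      by (intro AE_I2) simp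
  qed
  have cond_int: "integrable M (\<lambda>\<omega>. (V \<omega> \<bullet> b) * real_cond_exp M F (\<lambda>\<omega>. X \<omega> \<bullet> b) \<omega>)"
    and cond_eq: "(\<integral>\<omega>. (V \<omega> \<bullet> b) * real_cond_exp M F (\<lambda>\<omega>. X \<omega> \<bullet> b) \<omega> \<partial>M)
      = (\<integral>\<omega>. (V \<omega> \<bullet> b) * (X \<omega> \<bullet> b) \<partial>M)" if "b \<in> Basis" for b
    using real_cond_exp_intg[OF component_int[OF that]] V_meas X_meas by auto
  have inner_sum: "V \<omega> \<bullet> X \<omega> = (\<Sum>b\<in>Basis. (V \<omega> \<bullet> b) * (X \<omega> \<bullet> b))" for \<omega>
    by (rule euclidean_inner)
  have inner_cond_sum: "V \<omega> \<bullet> cond_exp_vec M F X \<omega>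
      = (\<Sum>b\<in>Basis. (V \<omega> \<bullet> b) * real_cond_exp M F (\<lambda>\<omega>. X \<omega> \<bullet> b) \<omega>)" for \<omega>
    unfolding cond_exp_vec_def by (simp add: inner_sum_right mult.commute)
  show "integrable M (\<lambda>\<omega>. V \<omega> \<bullet> X \<omega>)"
    unfolding inner_sum using component_int by auto
  show "integrable M (\<lambda>\<omega>. V \<omega> \<bullet> cond_exp_vec M F X \<omega>)"
    unfolding inner_cond_sum using cond_int by auto
  show "(\<integral>\<omega>. V \<omega> \<bullet> cond_exp_vec M F X \<omega> \<partial>M) = (\<integral>\<omega>. V \<omega> \<bullet> X \<omega> \<partial>M)"
    unfolding inner_cond_sum inner_sum using cond_int component_int cond_eq
    by (simp add: Bochner_Integration.integral_sum)
qed

lemma measurable_scaled_oracle: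
  fixes g :: "'v::euclidean_space \<Rightarrow> 'b \<Rightarrow> 'v"
  assumes g_meas: "(\<lambda>(x, \<xi>). g x \<xi>) \<in> borel_measurable (borel \<Otimes>\<^sub>M D)"
    and [measurable]: "xi \<in> measurable N D" "q \<in> borel_measurable N" "eps \<in> borel_measurable N"
  shows "(\<lambda>(x, \<omega>). q \<omega> *\<^sub>R g x (xi \<omega>) + eps \<omega>) \<in> borel_measurable (borel \<Otimes>\<^sub>M N)"
proof -
  have "(\<lambda>(x, \<omega>). (x, xi \<omega>)) \<in> measurable (borel \<Otimes>\<^sub>M N) (borel \<Otimes>\<^sub>M D)"
    by measurable
  from measurable_comp[OF this g_meas]
  have [measurable]: "(\<lambda>(x, \<omega>). g x (xi \<omega>)) \<in> borel_measurable (borel \<Otimes>\<^sub>M N)"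
    by (simp add: o_def case_prod_beta)
  show ?thesis
    by measurable
qed

text \<open>\<open>G k x \<omega>\<close> is the random search direction of iteration \<open>k\<close> queried at the point \<open>x\<close>; its joint
  measurability with respect to \<open>Fk (Suc k)\<close> is what makes the iterates adapted.\<close>

locale stochastic_iteration = prob_space M
  for M :: "'a measure" +
  fixes Fk :: "nat \<Rightarrow> 'a measure" and G :: "nat \<Rightarrow> 'v::euclidean_space \<Rightarrow> 'a \<Rightarrow> 'v"
    and alpha :: "nat \<Rightarrow> real" and w :: "nat \<Rightarrow> 'a \<Rightarrow> 'v" and w1 :: 'v
  assumes Fk_sub: "\<And>k. sigma_finite_subalgebra M (Fk k)"
    and Fk_mono: "\<And>k. sets (Fk k) \<subseteq> sets (Fk (Suc k))"
    and G_meas: "\<And>k. (\<lambda>(x, \<omega>). G k x \<omega>) \<in> borel_measurable (borel \<Otimes>\<^sub>M Fk (Suc k))"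
    and w_init: "\<And>\<omega>. \<omega> \<in> space M \<Longrightarrow> w 1 \<omega> = w1"
    and w_step: "\<And>k \<omega>. k \<ge> 1 \<Longrightarrow> \<omega> \<in> space M \<Longrightarrow> w (Suc k) \<omega> = w k \<omega> - alpha k *\<^sub>R G k (w k \<omega>) \<omega>"
begin

lemma subalgebra_Fk: "subalgebra M (Fk k)"
  using Fk_sub[of k] by (rule sigma_finite_subalgebra.subalg)

lemma space_Fk: "space (Fk k) = space M"
  using subalgebra_Fk[of k] unfolding subalgebra_def by simp

lemma subalgebra_Fk_Suc: "subalgebra (Fk (Suc k)) (Fk k)"
  unfolding subalgebra_def using Fk_mono[of k] by (simp add: space_Fk)

lemma step_adapted:
  assumes "w k \<in> borel_measurable (Fk k)"
  shows "(\<lambda>\<omega>. G k (w k \<omega>) \<omega>) \<in> borel_measurable (Fk (Suc k))"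
proof -
  have "w k \<in> borel_measurable (Fk (Suc k))"
    using assms by (rule measurable_from_subalg[OF subalgebra_Fk_Suc])
  then have "(\<lambda>\<omega>. (w k \<omega>, \<omega>)) \<in> measurable (Fk (Suc k)) (borel \<Otimes>\<^sub>M Fk (Suc k))"
    by (intro measurable_Pair) auto
  from measurable_comp[OF this G_meas] show ?thesis
    by (simp add: o_def)
qed

lemma iterate_adapted:
  assumes "k \<ge> 1"
  shows "w k \<in> borel_measurable (Fk k)"
  using assms
proof (induction k rule: dec_induct)
  case base
  show ?case
    using w_init by (subst measurable_cong[where g = "\<lambda>_. w1"]) (auto simp: space_Fk)
next
  case (step k)
  have "w k \<in> borel_measurable (Fk (Suc k))"
    using step.IH by (rule measurable_from_subalg[OF subalgebra_Fk_Suc])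
  then have "(\<lambda>\<omega>. w k \<omega> - alpha k *\<^sub>R G k (w k \<omega>) \<omega>) \<in> borel_measurable (Fk (Suc k))"
    using step_adapted[OF step.IH] by measurable
  then show ?case
    using w_step[OF step.hyps(1)] by (subst measurable_cong) (auto simp: space_Fk)
qed

lemma iterate_measurable: "k \<ge> 1 \<Longrightarrow> w k \<in> borel_measurable M"
  using iterate_adapted by (rule measurable_from_subalg[OF subalgebra_Fk])

lemma step_measurable: "k \<ge> 1 \<Longrightarrow> (\<lambda>\<omega>. G k (w k \<omega>) \<omega>) \<in> borel_measurable M"
  using step_adapted[OF iterate_adapted] by (rule measurable_from_subalg[OF subalgebra_Fk])

lemma integrable_iterate_dist_sq:
  assumes step_sq_int: "\<And>k. k \<ge> 1 \<Longrightarrow> integrable M (\<lambda>\<omega>. (norm (G k (w k \<omega>) \<omega>))\<^sup>2)"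
    and "k \<ge> 1"
  shows "integrable M (\<lambda>\<omega>. (norm (w k \<omega> - x))\<^sup>2)"
  using \<open>k \<ge> 1\<close>
proof (induction k rule: dec_induct)
  case base
  show ?case
    using w_init by (subst Bochner_Integration.integrable_cong[where g = "\<lambda>_. (norm (w1 - x))\<^sup>2"]) auto
next
  case (step k)
  have bound: "(norm (w (Suc k) \<omega> - x))\<^sup>2
      \<le> 2 * (norm (w k \<omega> - x))\<^sup>2 + 2 * (alpha k)\<^sup>2 * (norm (G k (w k \<omega>) \<omega>))\<^sup>2"
    if "\<omega> \<in> space M" for \<omega>
  proof -
    have diff_eq: "w (Suc k) \<omega> - x = (w k \<omega> - x) - alpha k *\<^sub>R G k (w k \<omega>) \<omega>"
      using w_step[OF step.hyps(1) that] by simp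
    have "norm (w (Suc k) \<omega> - x) \<le> norm (w k \<omega> - x) + \<bar>alpha k\<bar> * norm (G k (w k \<omega>) \<omega>)"
      unfolding diff_eq using norm_triangle_ineq4[of "w k \<omega> - x" "alpha k *\<^sub>R G k (w k \<omega>) \<omega>"] by simp
    then have "(norm (w (Suc k) \<omega> - x))\<^sup>2 \<le> (norm (w k \<omega> - x) + \<bar>alpha k\<bar> * norm (G k (w k \<omega>) \<omega>))\<^sup>2"
      by (intro power_mono) auto
    also have "\<dots> \<le> 2 * (norm (w k \<omega> - x))\<^sup>2 + 2 * (alpha k)\<^sup>2 * (norm (G k (w k \<omega>) \<omega>))\<^sup>2"
      using sum_squares_bound[of "norm (w k \<omega> - x)" "\<bar>alpha k\<bar> * norm (G k (w k \<omega>) \<omega>)"]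
      by (simp add: power2_sum power_mult_distrib)
    finally show ?thesis .
  qed
  show ?case
  proof (rule Bochner_Integration.integrable_bound)
    show "integrable M (\<lambda>\<omega>. 2 * (norm (w k \<omega> - x))\<^sup>2 + 2 * (alpha k)\<^sup>2 * (norm (G k (w k \<omega>) \<omega>))\<^sup>2)"
      using step.IH step_sq_int[OF step.hyps(1)] by auto
    show "(\<lambda>\<omega>. (norm (w (Suc k) \<omega> - x))\<^sup>2) \<in> borel_measurable M"
      using iterate_measurable[of "Suc k"] by measurable
    show "AE \<omega> in M. norm ((norm (w (Suc k) \<omega> - x))\<^sup>2)
        \<le> norm (2 * (norm (w k \<omega> - x))\<^sup>2 + 2 * (alpha k)\<^sup>2 * (norm (G k (w k \<omega>) \<omega>))\<^sup>2)"
      using bound by (intro AE_I2) simp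
  qed
qed

end

locale sgd_strongly_convex = stochastic_iteration M Fk G alpha w w1
  for M :: "'a measure" and Fk G alpha and w :: "nat \<Rightarrow> 'a \<Rightarrow> 'v::euclidean_space" and w1 +
  fixes F :: "'v \<Rightarrow> real" and gradF :: "'v \<Rightarrow> 'v" and L c :: real and wstar :: 'v
  assumes F_deriv: "\<And>x. (F has_derivative (\<lambda>h. gradF x \<bullet> h)) (at x)"
    and gradF_cont: "continuous_on UNIV gradF"
    and gradF_Lip: "\<And>x y. norm (gradF x - gradF y) \<le> L * norm (x - y)"
    and c_pos: "c > 0"
    and strongly_convex: "\<And>x y. F y \<ge> F x + gradF x \<bullet> (y - x) + c / 2 * (norm (y - x))\<^sup>2"
    and wstar_min: "\<And>x. F wstar \<le> F x"
    and step_sq_int: "\<And>k. k \<ge> 1 \<Longrightarrow> integrable M (\<lambda>\<omega>. (norm (G k (w k \<omega>) \<omega>))\<^sup>2)"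
begin

lemma c_le_L: "c \<le> L"
proof -
  obtain b :: 'v where "b \<in> Basis"
    using nonempty_Basis by blast
  then have "b \<noteq> 0"
    by auto
  then show ?thesis
    by (rule strong_convexity_modulus_le_Lipschitz[OF strongly_convex gradF_Lip])
qed

lemma L_pos: "L > 0"
  using c_le_L c_pos by simp

lemma gradF_wstar: "gradF wstar = 0"
  using F_deriv wstar_min by (rule gradient_zero_at_minimum)

lemma suboptimality_le_dist_sq: "F x - F wstar \<le> L / 2 * (norm (x - wstar))\<^sup>2"
  using Lipschitz_gradient_quadratic_upper_bound[OF F_deriv gradF_Lip, of x wstar]
  by (simp add: gradF_wstar)

lemma norm_gradF_le_dist: "norm (gradF x) \<le> L * norm (x - wstar)"
  using gradF_Lip[of x wstar] by (simp add: gradF_wstar)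

lemma F_borel: "F \<in> borel_measurable borel"
proof -
  have "continuous_on UNIV F"
    using has_derivative_continuous[OF F_deriv] by (intro continuous_at_imp_continuous_on) blast
  then show ?thesis
    by (rule borel_measurable_continuous_onI)
qed

lemma integrable_suboptimality:
  assumes "k \<ge> 1"
  shows "integrable M (\<lambda>\<omega>. F (w k \<omega>) - F wstar)"
proof (rule Bochner_Integration.integrable_bound)
  show "integrable M (\<lambda>\<omega>. L / 2 * (norm (w k \<omega> - wstar))\<^sup>2)"
    using integrable_iterate_dist_sq[OF step_sq_int assms] by simp
  show "(\<lambda>\<omega>. F (w k \<omega>) - F wstar) \<in> borel_measurable M"
    using measurable_compose[OF iterate_measurable[OF assms] F_borel] by simp
  show "AE \<omega> in M. norm (F (w k \<omega>) - F wstar) \<le> norm (L / 2 * (norm (w k \<omega> - wstar))\<^sup>2)"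
    using suboptimality_le_dist_sq wstar_min L_pos by (intro AE_I2) simp
qed

lemma gradF_iterate_adapted: "k \<ge> 1 \<Longrightarrow> (\<lambda>\<omega>. gradF (w k \<omega>)) \<in> borel_measurable (Fk k)"
  using measurable_compose[OF iterate_adapted borel_measurable_continuous_onI[OF gradF_cont]] by simp

lemma integrable_gradF_sq:
  assumes "k \<ge> 1"
  shows "integrable M (\<lambda>\<omega>. (norm (gradF (w k \<omega>)))\<^sup>2)"
proof (rule Bochner_Integration.integrable_bound)
  show "integrable M (\<lambda>\<omega>. L\<^sup>2 * (norm (w k \<omega> - wstar))\<^sup>2)"
    using integrable_iterate_dist_sq[OF step_sq_int assms] by simp
  have "(\<lambda>\<omega>. gradF (w k \<omega>)) \<in> borel_measurable M"
    using gradF_iterate_adapted[OF assms] by (rule measurable_from_subalg[OF subalgebra_Fk])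
  then show "(\<lambda>\<omega>. (norm (gradF (w k \<omega>)))\<^sup>2) \<in> borel_measurable M"
    by measurable
  have "(norm (gradF x))\<^sup>2 \<le> L\<^sup>2 * (norm (x - wstar))\<^sup>2" for x
    using power_mono[OF norm_gradF_le_dist norm_ge_zero, of x 2] by (simp add: power_mult_distrib)
  then show "AE \<omega> in M. norm ((norm (gradF (w k \<omega>)))\<^sup>2) \<le> norm (L\<^sup>2 * (norm (w k \<omega> - wstar))\<^sup>2)"
    by (intro AE_I2) simp
qed

lemma
  assumes "k \<ge> 1"
  shows integrable_inner_gradF_step: "integrable M (\<lambda>\<omega>. gradF (w k \<omega>) \<bullet> G k (w k \<omega>) \<omega>)"
    and integral_inner_gradF_step_cond_exp:
      "(\<integral>\<omega>. gradF (w k \<omega>) \<bullet> cond_exp_vec M (Fk k) (\<lambda>\<omega>. G k (w k \<omega>) \<omega>) \<omega> \<partial>M)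
        = (\<integral>\<omega>. gradF (w k \<omega>) \<bullet> G k (w k \<omega>) \<omega> \<partial>M)"
    and integrable_inner_gradF_cond_exp:
      "integrable M (\<lambda>\<omega>. gradF (w k \<omega>) \<bullet> cond_exp_vec M (Fk k) (\<lambda>\<omega>. G k (w k \<omega>) \<omega>) \<omega>)"
  using sigma_finite_subalgebra.integral_inner_cond_exp_vec[OF Fk_sub gradF_iterate_adapted[OF assms]
      step_measurable[OF assms] integrable_gradF_sq[OF assms] step_sq_int[OF assms]]
  by auto

lemma expected_descent:
  assumes "k \<ge> 1"
  shows "(\<integral>\<omega>. F (w (Suc k) \<omega>) - F wstar \<partial>M)
    \<le> (\<integral>\<omega>. F (w k \<omega>) - F wstar \<partial>M) - alpha k * (\<integral>\<omega>. gradF (w k \<omega>) \<bullet> G k (w k \<omega>) \<omega> \<partial>M)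
      + L / 2 * (alpha k)\<^sup>2 * (\<integral>\<omega>. (norm (G k (w k \<omega>) \<omega>))\<^sup>2 \<partial>M)"
proof -
  have "F (w (Suc k) \<omega>) - F wstar
      \<le> F (w k \<omega>) - F wstar - alpha k * (gradF (w k \<omega>) \<bullet> G k (w k \<omega>) \<omega>)
        + L / 2 * (alpha k)\<^sup>2 * (norm (G k (w k \<omega>) \<omega>))\<^sup>2" if "\<omega> \<in> space M" for \<omega>
    using Lipschitz_gradient_quadratic_upper_bound[OF F_deriv gradF_Lip, where x = "w k \<omega>" and y = "w (Suc k) \<omega>"]
    by (simp add: w_step[OF assms that] power_mult_distrib)
  then have "(\<integral>\<omega>. F (w (Suc k) \<omega>) - F wstar \<partial>M)
      \<le> (\<integral>\<omega>. F (w k \<omega>) - F wstar - alpha k * (gradF (w k \<omega>) \<bullet> G k (w k \<omega>) \<omega>)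
        + L / 2 * (alpha k)\<^sup>2 * (norm (G k (w k \<omega>) \<omega>))\<^sup>2 \<partial>M)"
    using assms integrable_suboptimality integrable_inner_gradF_step step_sq_int
    by (intro Bochner_Integration.integral_mono) auto
  then show ?thesis
    using assms integrable_suboptimality integrable_inner_gradF_step step_sq_int by simp
qed

lemma expected_inner_gradF_step_ge:
  assumes "k \<ge> 1"
    and first_moment: "AE \<omega> in M.
      gradF (w k \<omega>) \<bullet> cond_exp_vec M (Fk k) (\<lambda>\<omega>. G k (w k \<omega>) \<omega>) \<omega> \<ge> mu_q * (norm (gradF (w k \<omega>)))\<^sup>2"
  shows "mu_q * (\<integral>\<omega>. (norm (gradF (w k \<omega>)))\<^sup>2 \<partial>M) \<le> (\<integral>\<omega>. gradF (w k \<omega>) \<bullet> G k (w k \<omega>) \<omega> \<partial>M)"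
proof -
  have "mu_q * (\<integral>\<omega>. (norm (gradF (w k \<omega>)))\<^sup>2 \<partial>M) = (\<integral>\<omega>. mu_q * (norm (gradF (w k \<omega>)))\<^sup>2 \<partial>M)"
    by simp
  also have "\<dots> \<le> (\<integral>\<omega>. gradF (w k \<omega>) \<bullet> cond_exp_vec M (Fk k) (\<lambda>\<omega>. G k (w k \<omega>) \<omega>) \<omega> \<partial>M)"
    using first_moment integrable_gradF_sq[OF assms(1)] integrable_inner_gradF_cond_exp[OF assms(1)]
    by (intro Bochner_Integration.integral_mono_AE) auto
  finally show ?thesis
    unfolding integral_inner_gradF_step_cond_exp[OF assms(1)] .
qed

lemma expected_step_sq_le:
  assumes "k \<ge> 1"
    and mean_bound: "AE \<omega> in M.
      norm (cond_exp_vec M (Fk k) (\<lambda>\<omega>. G k (w k \<omega>) \<omega>) \<omega>) \<le> mu_qG * norm (gradF (w k \<omega>))"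
    and variance_bound: "AE \<omega> in M.
      real_cond_exp M (Fk k) (\<lambda>\<omega>. (norm (G k (w k \<omega>) \<omega>))\<^sup>2) \<omega>
        - (norm (cond_exp_vec M (Fk k) (\<lambda>\<omega>. G k (w k \<omega>) \<omega>) \<omega>))\<^sup>2
      \<le> Mt + MV * (norm (gradF (w k \<omega>)))\<^sup>2"
  shows "(\<integral>\<omega>. (norm (G k (w k \<omega>) \<omega>))\<^sup>2 \<partial>M)
    \<le> Mt + (MV + mu_qG\<^sup>2) * (\<integral>\<omega>. (norm (gradF (w k \<omega>)))\<^sup>2 \<partial>M)"
proof -
  let ?N = "\<lambda>\<omega>. (norm (G k (w k \<omega>) \<omega>))\<^sup>2"
  have "(\<integral>\<omega>. ?N \<omega> \<partial>M) = (\<integral>\<omega>. real_cond_exp M (Fk k) ?N \<omega> \<partial>M)"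
    using sigma_finite_subalgebra.real_cond_exp_int(2)[OF Fk_sub step_sq_int[OF assms(1)]] by simp
  also have "\<dots> \<le> (\<integral>\<omega>. Mt + (MV + mu_qG\<^sup>2) * (norm (gradF (w k \<omega>)))\<^sup>2 \<partial>M)"
  proof (rule Bochner_Integration.integral_mono_AE)
    show "integrable M (real_cond_exp M (Fk k) ?N)"
      using sigma_finite_subalgebra.real_cond_exp_int(1)[OF Fk_sub step_sq_int[OF assms(1)]] .
    show "integrable M (\<lambda>\<omega>. Mt + (MV + mu_qG\<^sup>2) * (norm (gradF (w k \<omega>)))\<^sup>2)"
      using integrable_gradF_sq[OF assms(1)] by simp
    show "AE \<omega> in M. real_cond_exp M (Fk k) ?N \<omega> \<le> Mt + (MV + mu_qG\<^sup>2) * (norm (gradF (w k \<omega>)))\<^sup>2"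
      using variance_bound mean_bound
    proof eventually_elim
      case (elim \<omega>)
      have "(norm (cond_exp_vec M (Fk k) (\<lambda>\<omega>. G k (w k \<omega>) \<omega>) \<omega>))\<^sup>2 \<le> (mu_qG * norm (gradF (w k \<omega>)))\<^sup>2"
        using elim(2) by (intro power_mono) auto
      with elim(1) show ?case
        by (simp add: algebra_simps)
    qed
  qed
  also have "\<dots> = Mt + (MV + mu_qG\<^sup>2) * (\<integral>\<omega>. (norm (gradF (w k \<omega>)))\<^sup>2 \<partial>M)"
    using integrable_gradF_sq[OF assms(1)] by (simp add: prob_space)
  finally show ?thesis .
qed

lemma expected_suboptimality_le_gradF_sq:
  assumes "k \<ge> 1"
  shows "2 * c * (\<integral>\<omega>. F (w k \<omega>) - F wstar \<partial>M) \<le> (\<integral>\<omega>. (norm (gradF (w k \<omega>)))\<^sup>2 \<partial>M)"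
proof -
  have "2 * c * (\<integral>\<omega>. F (w k \<omega>) - F wstar \<partial>M) = (\<integral>\<omega>. 2 * c * (F (w k \<omega>) - F wstar) \<partial>M)"
    by simp
  also have "\<dots> \<le> (\<integral>\<omega>. (norm (gradF (w k \<omega>)))\<^sup>2 \<partial>M)"
    using integrable_suboptimality[OF assms] integrable_gradF_sq[OF assms]
      strongly_convex_suboptimality_le_gradient[OF c_pos strongly_convex]
    by (intro Bochner_Integration.integral_mono) auto
  finally show ?thesis .
qed

lemma expected_suboptimality_step:
  assumes k: "k \<ge> 1"
    and first_moment: "AE \<omega> in M.
      gradF (w k \<omega>) \<bullet> cond_exp_vec M (Fk k) (\<lambda>\<omega>. G k (w k \<omega>) \<omega>) \<omega> \<ge> mu_q * (norm (gradF (w k \<omega>)))\<^sup>2"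
    and mean_bound: "AE \<omega> in M.
      norm (cond_exp_vec M (Fk k) (\<lambda>\<omega>. G k (w k \<omega>) \<omega>) \<omega>) \<le> mu_qG * norm (gradF (w k \<omega>))"
    and variance_bound: "AE \<omega> in M.
      real_cond_exp M (Fk k) (\<lambda>\<omega>. (norm (G k (w k \<omega>) \<omega>))\<^sup>2) \<omega>
        - (norm (cond_exp_vec M (Fk k) (\<lambda>\<omega>. G k (w k \<omega>) \<omega>) \<omega>))\<^sup>2
      \<le> Mt + MV * (norm (gradF (w k \<omega>)))\<^sup>2"
    and alpha_nonneg: "alpha k \<ge> 0" and mu_q_nonneg: "mu_q \<ge> 0"
    and stepsize: "alpha k * L * (MV + mu_qG\<^sup>2) \<le> mu_q"
  shows "(\<integral>\<omega>. F (w (Suc k) \<omega>) - F wstar \<partial>M)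
    \<le> (1 - alpha k * c * mu_q) * (\<integral>\<omega>. F (w k \<omega>) - F wstar \<partial>M) + L * (alpha k)\<^sup>2 * Mt / 2"
proof -
  define a where "a = alpha k"
  define A where "A = (\<integral>\<omega>. F (w k \<omega>) - F wstar \<partial>M)"
  define B where "B = (\<integral>\<omega>. (norm (gradF (w k \<omega>)))\<^sup>2 \<partial>M)"
  define I where "I = (\<integral>\<omega>. gradF (w k \<omega>) \<bullet> G k (w k \<omega>) \<omega> \<partial>M)"
  define N where "N = (\<integral>\<omega>. (norm (G k (w k \<omega>) \<omega>))\<^sup>2 \<partial>M)"
  define MG where "MG = MV + mu_qG\<^sup>2"
  have "a * (mu_q * B) \<le> a * I"
    using expected_inner_gradF_step_ge[OF k first_moment] alpha_nonneg
    unfolding a_def B_def I_def by (rule mult_left_mono)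
  moreover have "L / 2 * a\<^sup>2 * N \<le> L / 2 * a\<^sup>2 * (Mt + MG * B)"
    using expected_step_sq_le[OF k mean_bound variance_bound] L_pos
    unfolding B_def N_def MG_def by (intro mult_left_mono) auto
  moreover have "L / 2 * a\<^sup>2 * (MG * B) \<le> mu_q * (a * B) / 2"
  proof -
    have "L / 2 * a\<^sup>2 * (MG * B) = (a * L * MG) * (a * B) / 2"
      by (simp add: power2_eq_square)
    also have "\<dots> \<le> mu_q * (a * B) / 2"
      using stepsize alpha_nonneg unfolding a_def MG_def B_def
      by (intro divide_right_mono mult_right_mono) auto
    finally show ?thesis .
  qed
  moreover have "a * c * mu_q * A \<le> mu_q * (a * B) / 2"
    using mult_left_mono[OF expected_suboptimality_le_gradF_sq[OF k], of "a * mu_q / 2"]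
      alpha_nonneg mu_q_nonneg unfolding a_def A_def B_def by (simp add: algebra_simps)
  moreover have "(\<integral>\<omega>. F (w (Suc k) \<omega>) - F wstar \<partial>M) \<le> A - a * I + L / 2 * a\<^sup>2 * N"
    using expected_descent[OF k] unfolding a_def A_def I_def N_def .
  ultimately show ?thesis
    unfolding a_def[symmetric] A_def[symmetric] by (simp add: algebra_simps)
qed

lemma expected_suboptimality_le_harmonic:
  assumes alpha_def: "\<And>k. alpha k = beta / (gamma + real k)"
    and gamma_pos: "gamma > 0" and beta_kappa: "beta * c * mu_q > 1"
    and mu_q_pos: "mu_q > 0" and mu_q_le: "mu_q \<le> mu_qG" and MV_nonneg: "MV \<ge> 0" and Mt_nonneg: "Mt \<ge> 0"
    and alpha1_le: "alpha 1 \<le> mu_q / (L * (MV + mu_qG\<^sup>2))"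
    and first_moment: "\<And>k. k \<ge> 1 \<Longrightarrow> AE \<omega> in M.
      gradF (w k \<omega>) \<bullet> cond_exp_vec M (Fk k) (\<lambda>\<omega>. G k (w k \<omega>) \<omega>) \<omega> \<ge> mu_q * (norm (gradF (w k \<omega>)))\<^sup>2"
    and mean_bound: "\<And>k. k \<ge> 1 \<Longrightarrow> AE \<omega> in M.
      norm (cond_exp_vec M (Fk k) (\<lambda>\<omega>. G k (w k \<omega>) \<omega>) \<omega>) \<le> mu_qG * norm (gradF (w k \<omega>))"
    and variance_bound: "\<And>k. k \<ge> 1 \<Longrightarrow> AE \<omega> in M.
      real_cond_exp M (Fk k) (\<lambda>\<omega>. (norm (G k (w k \<omega>) \<omega>))\<^sup>2) \<omega>
        - (norm (cond_exp_vec M (Fk k) (\<lambda>\<omega>. G k (w k \<omega>) \<omega>) \<omega>))\<^sup>2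
      \<le> Mt + MV * (norm (gradF (w k \<omega>)))\<^sup>2"
    and "k \<ge> 1"
  shows "(\<integral>\<omega>. F (w k \<omega>) - F wstar \<partial>M)
    \<le> max (beta\<^sup>2 * L * Mt / (2 * (beta * c * mu_q - 1))) ((gamma + 1) * (F w1 - F wstar)) / (gamma + real k)"
proof -
  define MG where "MG = MV + mu_qG\<^sup>2"
  define nu where "nu = max (beta\<^sup>2 * L * Mt / (2 * (beta * c * mu_q - 1))) ((gamma + 1) * (F w1 - F wstar))"
  have beta_pos: "beta > 0"
    using beta_kappa c_pos mu_q_pos by (intro zero_less_mult_pos2[of beta "c * mu_q"]) (auto simp: mult.assoc)
  have alpha_nonneg: "alpha k \<ge> 0" for k
    unfolding alpha_def using beta_pos gamma_pos by simp
  have MG_ge: "mu_q\<^sup>2 \<le> MG"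
    unfolding MG_def using power_mono[OF mu_q_le less_imp_le[OF mu_q_pos], of 2] MV_nonneg by linarith
  note stepsize = harmonic_stepsize_conditions[OF alpha_def gamma_pos beta_pos mu_q_pos MG_ge L_pos c_le_L
      alpha1_le[folded MG_def]]
  have recursion: "(\<integral>\<omega>. F (w (Suc k) \<omega>) - F wstar \<partial>M)
      \<le> (1 - alpha k * (c * mu_q)) * (\<integral>\<omega>. F (w k \<omega>) - F wstar \<partial>M) + L * Mt / 2 * (alpha k)\<^sup>2"
    if "k \<ge> 1" for k
    using expected_suboptimality_step[OF that first_moment[OF that] mean_bound[OF that]
        variance_bound[OF that] alpha_nonneg less_imp_le[OF mu_q_pos]] stepsize(1)[OF that]
    unfolding MG_def by (simp add: mult_ac)
  have init: "(\<integral>\<omega>. F (w 1 \<omega>) - F wstar \<partial>M) \<le> nu / (gamma + 1)"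
  proof -
    have "(\<integral>\<omega>. F (w 1 \<omega>) - F wstar \<partial>M) = F w1 - F wstar"
      using w_init by (simp add: prob_space cong: Bochner_Integration.integral_cong)
    also have "\<dots> \<le> nu / (gamma + 1)"
      unfolding nu_def using gamma_pos by (simp add: pos_le_divide_eq mult.commute)
    finally show ?thesis .
  qed
  have "beta\<^sup>2 * (L * Mt) / (2 * (beta * (c * mu_q) - 1)) \<le> nu"
    unfolding nu_def by (simp add: mult.assoc)
  moreover have "beta * (c * mu_q) > 1" and "L * Mt \<ge> 0"
    using beta_kappa L_pos Mt_nonneg by (simp_all add: mult.assoc)
  ultimately show ?thesis
    using diminishing_stepsize_recursion[where e = "\<lambda>k. \<integral>\<omega>. F (w k \<omega>) - F wstar \<partial>M",
        OF alpha_def gamma_pos _ _ _ init stepsize(2) recursion \<open>k \<ge> 1\<close>]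
    unfolding nu_def by blast
qed

end

theorem theorem2:
  fixes F :: "'v::euclidean_space \<Rightarrow> real"
    and gradF :: "'v \<Rightarrow> 'v"
    and L c :: real
    and wstar :: 'v
    and D :: "'b measure" and ell :: "'b \<Rightarrow> 'v \<Rightarrow> real" and g :: "'v \<Rightarrow> 'b \<Rightarrow> 'v"
    and M :: "'a measure" and Fk :: "nat \<Rightarrow> 'a measure"
    and xi :: "nat \<Rightarrow> 'a \<Rightarrow> 'b" and q :: "nat \<Rightarrow> 'a \<Rightarrow> real" and eps :: "nat \<Rightarrow> 'a \<Rightarrow> 'v"
    and qmin qmax sigma_eps :: real
    and w :: "nat \<Rightarrow> 'a \<Rightarrow> 'v" and w1 :: 'v
    and alpha :: "nat \<Rightarrow> real" and beta gamma :: real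
    and mu muG Mt MV :: real
  defines "gt \<equiv> (\<lambda>k \<omega>. q k \<omega> *\<^sub>R g (w k \<omega>) (xi k \<omega>) + eps k \<omega>)"
    and "Fstar \<equiv> F wstar"
    and "mu_q \<equiv> qmin * mu"
    and "MG \<equiv> MV + qmax\<^sup>2 * muG\<^sup>2"
    and "nu_q \<equiv> max ((beta\<^sup>2 * L * Mt) / (2 * (beta * c * (qmin * mu) - 1))) ((gamma + 1) * (F w1 - F wstar))"
  assumes
    \<comment> \<open>F is continuously differentiable with L-Lipschitz gradient\<close>
    F_deriv: "\<And>x. (F has_derivative (\<lambda>h. gradF x \<bullet> h)) (at x)"
    and gradF_cont: "continuous_on UNIV gradF"
    and gradF_Lip: "\<And>x y. norm (gradF x - gradF y) \<le> L * norm (x - y)"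
    \<comment> \<open>strong convexity with parameter c > 0\<close>
    and c_pos: "c > 0"
    and strongly_convex: "\<And>x y. F y \<ge> F x + gradF x \<bullet> (y - x) + c / 2 * (norm (y - x))\<^sup>2"
    \<comment> \<open>wstar is the unique minimizer\<close>
    and wstar_min: "\<And>x. x \<noteq> wstar \<Longrightarrow> F wstar < F x"
    \<comment> \<open>standing setting: F is the expectation of the loss, g its stochastic gradient\<close>
    and D_prob: "prob_space D"
    and F_expect: "\<And>x. F x = (\<integral>\<xi>. ell \<xi> x \<partial>D)"
    and ell_grad: "\<And>\<xi> x. \<xi> \<in> space D \<Longrightarrow> (ell \<xi> has_derivative (\<lambda>h. g x \<xi> \<bullet> h)) (at x)"
    and g_meas: "(\<lambda>(x, \<xi>). g x \<xi>) \<in> borel_measurable (borel \<Otimes>\<^sub>M D)"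
    \<comment> \<open>probability space and filtration (randomness up to iteration k)\<close>
    and M_prob: "prob_space M"
    and Fk_sub: "\<And>k. sigma_finite_subalgebra M (Fk k)"
    and Fk_mono: "\<And>k. sets (Fk k) \<subseteq> sets (Fk (Suc k))"
    \<comment> \<open>xi_k i.i.d. from D, drawn at iteration k\<close>
    and xi_meas: "\<And>k. xi k \<in> measurable (Fk (Suc k)) D"
    and xi_distr: "\<And>k. distr M D (xi k) = D"
    and xi_indep: "prob_space.indep_vars M (\<lambda>_. D) xi UNIV"
    \<comment> \<open>shrinkage factors\<close>
    and qmin_pos: "qmin > 0" and qmin_le_qmax: "qmin \<le> qmax" and qmax_le1: "qmax \<le> 1"
    and q_meas: "\<And>k. q k \<in> borel_measurable (Fk (Suc k))"
    and q_bounds: "\<And>k \<omega>. \<omega> \<in> space M \<Longrightarrow> qmin \<le> q k \<omega> \<and> q k \<omega> \<le> qmax"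
    \<comment> \<open>quantization noise\<close>
    and eps_meas: "\<And>k. eps k \<in> borel_measurable (Fk (Suc k))"
    and eps_sq_int: "\<And>k. integrable M (\<lambda>\<omega>. (norm (eps k \<omega>))\<^sup>2)"
    and eps_mean0: "\<And>k. AE \<omega> in M. cond_exp_vec M (Fk k) (eps k) \<omega> = 0"
    and eps_var: "\<And>k. (\<integral>\<omega>. (norm (eps k \<omega>))\<^sup>2 \<partial>M) \<le> sigma_eps\<^sup>2"
    \<comment> \<open>the iteration\<close>
    and w_init: "\<And>\<omega>. \<omega> \<in> space M \<Longrightarrow> w 1 \<omega> = w1"
    and w_step: "\<And>k \<omega>. k \<ge> 1 \<Longrightarrow> \<omega> \<in> space M \<Longrightarrow> w (Suc k) \<omega> = w k \<omega> - alpha k *\<^sub>R gt k \<omega>"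
    and gt_sq_int: "\<And>k. k \<ge> 1 \<Longrightarrow> integrable M (\<lambda>\<omega>. (norm (gt k \<omega>))\<^sup>2)"
    \<comment> \<open>(a)\<close>
    and assm_a: "\<exists>S. open S \<and> (\<forall>k \<ge> 1. \<forall>\<omega> \<in> space M. w k \<omega> \<in> S) \<and> (\<forall>x \<in> S. F x \<ge> Fstar)"
    \<comment> \<open>(b)\<close>
    and mu_pos: "mu > 0" and mu_le_muG: "mu \<le> muG"
    and assm_b1: "\<And>k. k \<ge> 1 \<Longrightarrow> AE \<omega> in M.
        gradF (w k \<omega>) \<bullet> cond_exp_vec M (Fk k) (gt k) \<omega> \<ge> qmin * mu * (norm (gradF (w k \<omega>)))\<^sup>2"
    and assm_b2: "\<And>k. k \<ge> 1 \<Longrightarrow> AE \<omega> in M.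
        norm (cond_exp_vec M (Fk k) (gt k) \<omega>) \<le> qmax * muG * norm (gradF (w k \<omega>))"
    \<comment> \<open>(c)\<close>
    and Mt_nonneg: "Mt \<ge> 0" and MV_nonneg: "MV \<ge> 0"
    and assm_c: "\<And>k. k \<ge> 1 \<Longrightarrow> AE \<omega> in M.
        real_cond_exp M (Fk k) (\<lambda>\<omega>'. (norm (gt k \<omega>'))\<^sup>2) \<omega>
          - (norm (cond_exp_vec M (Fk k) (gt k) \<omega>))\<^sup>2
        \<le> Mt + MV * (norm (gradF (w k \<omega>)))\<^sup>2"
    \<comment> \<open>stepsizes\<close>
    and alpha_def: "\<And>k. alpha k = beta / (gamma + real k)"
    and beta_gt: "beta > 1 / (c * mu_q)"
    and gamma_pos: "gamma > 0"
    and alpha1_le: "alpha 1 \<le> mu_q / (L * MG)"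
  shows "\<forall>k \<ge> 1. (\<integral>\<omega>. F (w k \<omega>) - Fstar \<partial>M) \<le> nu_q / (gamma + real k)"
proof -
  \<comment> \<open>Of \<open>xi\<close>, \<open>q\<close> and \<open>eps\<close> only measurability is used: their distributional hypotheses,
    the representation of \<open>F\<close> through \<open>ell\<close> and hypothesis (a) are subsumed by (b), (c) and
    the global minimality of \<open>wstar\<close>.\<close>
  have wstar_le: "F wstar \<le> F x" for x
    using wstar_min[of x] by (cases "x = wstar") auto
  interpret sgd_strongly_convex M Fk "\<lambda>k x \<omega>. q k \<omega> *\<^sub>R g x (xi k \<omega>) + eps k \<omega>" alpha w w1 F gradF L c wstar
  proof (intro sgd_strongly_convex.intro stochastic_iteration.intro stochastic_iteration_axioms.intro
      sgd_strongly_convex_axioms.intro)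
  qed (use M_prob Fk_sub Fk_mono measurable_scaled_oracle[OF g_meas xi_meas q_meas eps_meas] w_init w_step
      gt_sq_int F_deriv gradF_cont gradF_Lip c_pos strongly_convex wstar_le in \<open>simp_all add: gt_def\<close>)
  have mu_q_pos: "mu_q > 0"
    unfolding mu_q_def using qmin_pos mu_pos by simp
  have mu_q_le: "mu_q \<le> qmax * muG"
    unfolding mu_q_def using qmin_pos mu_pos qmin_le_qmax mu_le_muG by (intro mult_mono) auto
  have beta_kappa: "beta * c * mu_q > 1"
    using beta_gt c_pos mu_q_pos by (simp add: divide_less_eq mult_ac)
  show ?thesis
    using expected_suboptimality_le_harmonic[OF alpha_def gamma_pos beta_kappa mu_q_pos mu_q_le MV_nonneg Mt_nonneg
        alpha1_le[unfolded MG_def, folded power_mult_distrib]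
        assm_b1[unfolded gt_def, folded mu_q_def] assm_b2[unfolded gt_def] assm_c[unfolded gt_def]]
    unfolding nu_q_def Fstar_def mu_q_def by blast
qed

end
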